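(* Let $d\ge1$, $N_1,\ldots,N_d\ge1$, and $p_j,q_j:\{0,\ldots,N_j\}\to[0,1]$ with $p_j(0)=q_j(0)=p_j(N_j)=q_j(N_j)=0$ and $\sum_k(p_k(i_k)+q_k(i_k))\le1$ on $\mathbb E=\{1,\ldots,N_1\}\times\cdots\times\{1,\ldots,N_d\}$. Let $\mathbf P_Z$ be the substochastic matrix on $\mathbb E$ with $\mathbf P_Z(\mathbf i,\mathbf i+\mathbf s_j)=p_j(i_j)$, $\mathbf P_Z(\mathbf i,\mathbf i-\mathbf s_j)=q_j(i_j)$ (when $\mathbf i\pm\mathbf s_j\in\mathbb E$), $\mathbf P_Z(\mathbf i,\mathbf i)=1-\sum_{k=1}^d(p_k(i_k)+q_k(i_k))$, and $0$ otherwise. Let $\preceq$ be the coordinatewise order on $\mathbb E$, $\mathbf C(\mathbf i,\mathbf i')=\mathbf 1(\mathbf i\preceq\mathbf i')$. Then $\mathbf P_X:=\mathbf C\mathbf P_Z^T\mathbf C^{-1}$ is given by $\mathbf P_X(\mathbf i,\mathbf i+\mathbf s_j)=q_j(i_j)$ (for $i_j<N_j$), $\mathbf P_X(\mathbf i,\mathbf i-\mathbf s_j)=p_j(i_j-1)$ (for $i_j>1$), $\mathbf P_X(\mathbf i,\mathbf i)=1-\sum_{k=1}^d\big(p_k(i_k-1)+q_k(i_k)\big)$, and $\mathbf P_X(\mathbf i,\mathbf i')=0$ for all other $\mathbf i'$.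
   Context: $\mathbf i=(i_1,\ldots,i_d)$, $\mathbf s_j$ is the $j$-th unit vector, $\mathbf i\preceq\mathbf i'$ iff $i_j\le i'_j$ for all $j$. *)

theory Defs
  imports Complex_Main
begin

text \<open>Points of the grid E = {1..N_0} x ... x {1..N_(d-1)} are encoded as functions
  nat => nat that vanish at coordinates j >= d (coordinates are indexed 0..d-1).\<close>

definition grid :: "nat \<Rightarrow> (nat \<Rightarrow> nat) \<Rightarrow> (nat \<Rightarrow> nat) set" where
  "grid d N = {i. (\<forall>j<d. 1 \<le> i j \<and> i j \<le> N j) \<and> (\<forall>j. d \<le> j \<longrightarrow> i j = 0)}"

definition mmult :: "'a set \<Rightarrow> ('a \<Rightarrow> 'a \<Rightarrow> real) \<Rightarrow> ('a \<Rightarrow> 'a \<Rightarrow> real) \<Rightarrow> 'a \<Rightarrow> 'a \<Rightarrow> real" where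
  "mmult S A B = (\<lambda>x y. \<Sum>z\<in>S. A x z * B z y)"

definition mtrans :: "('a \<Rightarrow> 'a \<Rightarrow> real) \<Rightarrow> 'a \<Rightarrow> 'a \<Rightarrow> real" where
  "mtrans A = (\<lambda>x y. A y x)"

definition mident :: "'a \<Rightarrow> 'a \<Rightarrow> real" where
  "mident = (\<lambda>x y. if x = y then 1 else 0)"

definition minv :: "'a set \<Rightarrow> ('a \<Rightarrow> 'a \<Rightarrow> real) \<Rightarrow> 'a \<Rightarrow> 'a \<Rightarrow> real" where
  "minv S A = (THE B. (\<forall>x\<in>S. \<forall>y\<in>S. mmult S A B x y = mident x y)
                    \<and> (\<forall>x\<in>S. \<forall>y\<in>S. mmult S B A x y = mident x y)
                    \<and> (\<forall>x y. x \<notin> S \<or> y \<notin> S \<longrightarrow> B x y = 0))"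

text \<open>The substochastic matrix P_Z (evaluated on E x E).\<close>
definition PZ :: "nat \<Rightarrow> (nat \<Rightarrow> nat \<Rightarrow> real) \<Rightarrow> (nat \<Rightarrow> nat \<Rightarrow> real)
                   \<Rightarrow> (nat \<Rightarrow> nat) \<Rightarrow> (nat \<Rightarrow> nat) \<Rightarrow> real" where
  "PZ d p q i i' =
     (if i' = i then 1 - (\<Sum>k<d. p k (i k) + q k (i k))
      else (\<Sum>j<d. (if i' = i(j := i j + 1) then p j (i j) else 0)
                 + (if i' = i(j := i j - 1) then q j (i j) else 0)))"

definition Cmat :: "nat \<Rightarrow> (nat \<Rightarrow> nat) \<Rightarrow> (nat \<Rightarrow> nat) \<Rightarrow> real" where
  "Cmat d i i' = (if \<forall>j<d. i j \<le> i' j then 1 else 0)"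

end

theory Submission
  imports Defs "HOL-Library.FuncSet"
begin

text \<open>The matrix C is the zeta matrix of the product order, so its inverse is the tensor
  product over the coordinates of the one-dimensional M\<ouml>bius matrices (identity minus the
  upper shift). It therefore suffices to prove the intertwining relation C P_Z^T = P_X C.
  Both sides are sums over the at most 2d + 1 grid neighbours of a point; comparing them
  coordinate by coordinate reduces the relation to an identity for a single birth-death chain on
  {1..N_j}, in which the conditions p_j(0) = p_j(N_j) = 0 take care of the endpoints.\<close>

lemma finite_grid: "finite (grid d N)"
proof -
  have "grid d N \<subseteq> {f. \<forall>x. (x \<in> {..<d} \<longrightarrow> f x \<in> {0..sum N {..<d}}) \<and> (x \<notin> {..<d} \<longrightarrow> f x = 0)}"
    unfolding grid_def by (auto intro: order_trans[OF _ member_le_sum])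
  then show ?thesis
    by (rule finite_subset) (rule finite_set_of_finite_funs, auto)
qed

lemma grid_eq_iff:
  assumes "i \<in> grid d N" "i' \<in> grid d N"
  shows "i = i' \<longleftrightarrow> (\<forall>j<d. i j = i' j)"
proof
  assume same: "\<forall>j<d. i j = i' j"
  show "i = i'"
  proof
    fix j
    show "i j = i' j"
      using assms same by (cases "j < d") (auto simp: grid_def)
  qed
qed simp

lemma fun_upd_Suc_in_grid_iff:
  "i \<in> grid d N \<Longrightarrow> j < d \<Longrightarrow> i(j := Suc (i j)) \<in> grid d N \<longleftrightarrow> i j < N j"
  unfolding grid_def by (auto simp: fun_upd_apply)

lemma fun_upd_pred_in_grid_iff:
  "i \<in> grid d N \<Longrightarrow> j < d \<Longrightarrow> i(j := i j - 1) \<in> grid d N \<longleftrightarrow> 1 < i j"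
  unfolding grid_def by (auto simp: fun_upd_apply)

lemma sum_grid_prod:
  fixes f :: "nat \<Rightarrow> nat \<Rightarrow> 'a :: comm_semiring_1"
  shows "(\<Sum>k\<in>grid d N. \<Prod>j<d. f j (k j)) = (\<Prod>j<d. \<Sum>x\<in>{1..N j}. f j x)"
proof -
  define extend :: "(nat \<Rightarrow> nat) \<Rightarrow> nat \<Rightarrow> nat"
    where "extend = (\<lambda>g j. if j < d then g j else 0)"
  let ?B = "PiE {..<d} (\<lambda>j. {1..N j})"
  have "grid d N = extend ` ?B"
  proof
    show "grid d N \<subseteq> extend ` ?B"
    proof
      fix k assume k: "k \<in> grid d N"
      then have "k = extend (restrict k {..<d})" "restrict k {..<d} \<in> ?B"
        by (auto simp: grid_def extend_def)
      then show "k \<in> extend ` ?B" by blast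
    qed
  qed (auto simp: grid_def extend_def PiE_def Pi_def)
  moreover have inj: "inj_on extend ?B"
  proof (rule inj_onI, rule ext)
    fix g h j assume "g \<in> ?B" "h \<in> ?B" and "extend g = extend h"
    then have "extend g j = extend h j" by simp
    with \<open>g \<in> ?B\<close> \<open>h \<in> ?B\<close> show "g j = h j"
      by (cases "j < d") (auto simp: extend_def PiE_def extensional_def)
  qed
  ultimately have "(\<Sum>k\<in>grid d N. \<Prod>j<d. f j (k j)) = (\<Sum>g\<in>?B. \<Prod>j<d. f j (extend g j))"
    using sum.reindex[OF inj, unfolded comp_def] by simp
  also have "\<dots> = (\<Sum>g\<in>?B. \<Prod>j<d. f j (g j))"
    by (intro sum.cong prod.cong) (auto simp: extend_def)
  also have "\<dots> = (\<Prod>j<d. \<Sum>x\<in>{1..N j}. f j x)"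
    by (rule prod_sum_PiE[symmetric]) auto
  finally show ?thesis .
qed

lemma mmult_assoc:
  "finite S \<Longrightarrow> mmult S A (mmult S B C) = mmult S (mmult S A B) C"
  unfolding mmult_def
  by (simp add: sum_distrib_left sum_distrib_right mult.assoc) (rule ext, rule ext, rule sum.swap)

lemma sum_mult_if_eq:
  fixes g :: "'a \<Rightarrow> real"
  assumes "finite S"
  shows "(\<Sum>k\<in>S. g k * (if k = b then e else 0)) = (if b \<in> S then g b * e else 0)"
proof -
  have "(\<Sum>k\<in>S. g k * (if k = b then e else 0)) = (\<Sum>k\<in>S. if k = b then g b * e else 0)"
    by (rule sum.cong) simp_all
  then show ?thesis using assms by simp
qed

lemma sum_mult_mident:
  assumes "finite S" "y \<in> S"
  shows "(\<Sum>z\<in>S. f z * mident z y) = f y"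
  using assms by (simp add: mident_def if_distrib cong: if_cong)

lemma sum_mident_mult:
  assumes "finite S" "x \<in> S"
  shows "(\<Sum>z\<in>S. mident x z * f z) = f x"
proof -
  have "(\<Sum>z\<in>S. mident x z * f z) = (\<Sum>z\<in>S. if x = z then f z else 0)"
    by (rule sum.cong) (simp_all add: mident_def)
  then show ?thesis using assms by simp
qed

lemma minv_eqI:
  assumes S: "finite S"
    and right: "\<forall>x\<in>S. \<forall>y\<in>S. mmult S A B x y = mident x y"
    and left: "\<forall>x\<in>S. \<forall>y\<in>S. mmult S B A x y = mident x y"
    and support: "\<forall>x y. x \<notin> S \<or> y \<notin> S \<longrightarrow> B x y = 0"
  shows "minv S A = B"
  unfolding minv_def
proof (rule the_equality)
  show "(\<forall>x\<in>S. \<forall>y\<in>S. mmult S A B x y = mident x y) \<and> (\<forall>x\<in>S. \<forall>y\<in>S. mmult S B A x y = mident x y)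
      \<and> (\<forall>x y. x \<notin> S \<or> y \<notin> S \<longrightarrow> B x y = 0)"
    using right left support by blast
next
  fix B' assume B': "(\<forall>x\<in>S. \<forall>y\<in>S. mmult S A B' x y = mident x y) \<and> (\<forall>x\<in>S. \<forall>y\<in>S. mmult S B' A x y = mident x y)
      \<and> (\<forall>x y. x \<notin> S \<or> y \<notin> S \<longrightarrow> B' x y = 0)"
  show "B' = B"
  proof (intro ext)
    fix x y
    show "B' x y = B x y"
    proof (cases "x \<in> S \<and> y \<in> S")
      case False
      then show ?thesis using B' support by auto
    next
      case True
      have "B' x y = mmult S B' (mmult S A B) x y"
        unfolding mmult_def[of S B'] using True right S by (simp add: sum_mult_mident)
      also have "\<dots> = mmult S (mmult S B' A) B x y"
        by (simp add: mmult_assoc S)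
      also have "\<dots> = B x y"
        unfolding mmult_def[of S _ B] using True B' S by (simp add: sum_mident_mult)
      finally show ?thesis .
    qed
  qed
qed

lemma mmult_cancel_right_inverse:
  assumes "finite S" "\<forall>x\<in>S. \<forall>y\<in>S. mmult S C M x y = mident x y" "x \<in> S" "y \<in> S"
  shows "mmult S (mmult S A C) M x y = A x y"
proof -
  have "mmult S (mmult S A C) M x y = mmult S A (mmult S C M) x y"
    by (simp add: mmult_assoc assms(1))
  also have "\<dots> = A x y"
    unfolding mmult_def[of S A] using assms by (simp add: sum_mult_mident)
  finally show ?thesis .
qed

definition order_mobius :: "nat \<Rightarrow> nat \<Rightarrow> real" where
  "order_mobius a b = (if b = a then 1 else 0) - (if b = Suc a then 1 else 0)"

definition Cmat_inv :: "nat \<Rightarrow> (nat \<Rightarrow> nat) \<Rightarrow> (nat \<Rightarrow> nat) \<Rightarrow> (nat \<Rightarrow> nat) \<Rightarrow> real" where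
  "Cmat_inv d N i i' =
     (if i \<in> grid d N \<and> i' \<in> grid d N then \<Prod>j<d. order_mobius (i j) (i' j) else 0)"

lemma indicator_all_eq_prod:
  "(if \<forall>j<(d::nat). P j then 1 else 0) = (\<Prod>j<d. if P j then 1 else (0::real))"
  by (induction d) (auto simp: less_Suc_eq)

lemma Cmat_eq_prod: "Cmat d i i' = (\<Prod>j<d. if i j \<le> i' j then 1 else 0)"
  unfolding Cmat_def by (rule indicator_all_eq_prod)

lemma sum_le_indicator_mult_order_mobius:
  assumes "1 \<le> a" "a \<le> n" "1 \<le> b" "b \<le> n"
  shows "(\<Sum>x\<in>{1..n}. (if a \<le> x then 1 else 0) * order_mobius x b) = (if a = b then 1 else 0)"
proof -
  have "(\<Sum>x\<in>{1..n}. (if a \<le> x then 1 else 0) * order_mobius x b)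
     = (\<Sum>x\<in>{1..n}. if x = b then (if a \<le> x then 1 else 0) else 0)
       - (\<Sum>x\<in>{1..n}. if x = b - 1 \<and> 0 < b then (if a \<le> x then 1 else 0) else (0::real))"
    unfolding sum_subtractf[symmetric] by (rule sum.cong) (auto simp: order_mobius_def)
  also have "\<dots> = (if a = b then 1 else 0)"
    using assms by (simp add: sum.delta'; arith)
  finally show ?thesis .
qed

lemma sum_order_mobius_mult_le_indicator:
  assumes "1 \<le> a" "a \<le> n" "1 \<le> b" "b \<le> n"
  shows "(\<Sum>x\<in>{1..n}. order_mobius a x * (if x \<le> b then 1 else 0)) = (if a = b then 1 else 0)"
proof -
  have "(\<Sum>x\<in>{1..n}. order_mobius a x * (if x \<le> b then 1 else 0))
     = (\<Sum>x\<in>{1..n}. if x = a then (if x \<le> b then 1 else 0) else 0)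
       - (\<Sum>x\<in>{1..n}. if x = Suc a then (if x \<le> b then 1 else 0) else (0::real))"
    unfolding sum_subtractf[symmetric] by (rule sum.cong) (auto simp: order_mobius_def)
  also have "\<dots> = (if a = b then 1 else 0)"
    using assms by (simp add: sum.delta')
  finally show ?thesis .
qed

lemma mident_grid_eq_prod:
  assumes "i \<in> grid d N" "i' \<in> grid d N"
  shows "mident i i' = (\<Prod>j<d. if i j = i' j then 1 else 0)"
  unfolding mident_def grid_eq_iff[OF assms] by (rule indicator_all_eq_prod)

lemma Cmat_mmult_Cmat_inv:
  assumes "i \<in> grid d N" "i' \<in> grid d N"
  shows "mmult (grid d N) (Cmat d) (Cmat_inv d N) i i' = mident i i'"
proof -
  have "mmult (grid d N) (Cmat d) (Cmat_inv d N) i i'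
     = (\<Sum>k\<in>grid d N. \<Prod>j<d. (if i j \<le> k j then 1 else 0) * order_mobius (k j) (i' j))"
    unfolding mmult_def Cmat_eq_prod Cmat_inv_def using assms
    by (auto simp: prod.distrib intro!: sum.cong)
  also have "\<dots> = (\<Prod>j<d. \<Sum>x\<in>{1..N j}. (if i j \<le> x then 1 else 0) * order_mobius x (i' j))"
    by (rule sum_grid_prod)
  also have "\<dots> = mident i i'"
    unfolding mident_grid_eq_prod[OF assms] using assms
    by (intro prod.cong refl sum_le_indicator_mult_order_mobius) (auto simp: grid_def)
  finally show ?thesis .
qed

lemma Cmat_inv_mmult_Cmat:
  assumes "i \<in> grid d N" "i' \<in> grid d N"
  shows "mmult (grid d N) (Cmat_inv d N) (Cmat d) i i' = mident i i'"
proof -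
  have "mmult (grid d N) (Cmat_inv d N) (Cmat d) i i'
     = (\<Sum>k\<in>grid d N. \<Prod>j<d. order_mobius (i j) (k j) * (if k j \<le> i' j then 1 else 0))"
    unfolding mmult_def Cmat_eq_prod Cmat_inv_def using assms
    by (auto simp: prod.distrib intro!: sum.cong)
  also have "\<dots> = (\<Prod>j<d. \<Sum>x\<in>{1..N j}. order_mobius (i j) x * (if x \<le> i' j then 1 else 0))"
    by (rule sum_grid_prod)
  also have "\<dots> = mident i i'"
    unfolding mident_grid_eq_prod[OF assms] using assms
    by (intro prod.cong refl sum_order_mobius_mult_le_indicator) (auto simp: grid_def)
  finally show ?thesis .
qed

lemma minv_Cmat: "minv (grid d N) (Cmat d) = Cmat_inv d N"
  by (rule minv_eqI) (auto simp: finite_grid Cmat_mmult_Cmat_inv Cmat_inv_mmult_Cmat Cmat_inv_def)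

definition grid_walk ::
  "nat \<Rightarrow> (nat \<Rightarrow> nat) \<Rightarrow> ((nat \<Rightarrow> nat) \<Rightarrow> real) \<Rightarrow> (nat \<Rightarrow> nat \<Rightarrow> real) \<Rightarrow> (nat \<Rightarrow> nat \<Rightarrow> real)
     \<Rightarrow> (nat \<Rightarrow> nat) \<Rightarrow> (nat \<Rightarrow> nat) \<Rightarrow> real" where
  "grid_walk d N stay up down i i' =
     (if i' = i then stay i
      else (\<Sum>j<d. (if i j < N j \<and> i' = i(j := i j + 1) then up j (i j) else 0)
                 + (if 1 < i j \<and> i' = i(j := i j - 1) then down j (i j) else 0)))"

lemma grid_walk_eq_sum:
  "grid_walk d N stay up down i i' = (if i' = i then stay i else 0)
     + (\<Sum>j<d. (if i' = i(j := i j + 1) then (if i j < N j then up j (i j) else 0) else 0)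
             + (if i' = i(j := i j - 1) then (if 1 < i j then down j (i j) else 0) else 0))"
proof (cases "i' = i")
  case True
  have "i \<noteq> i(j := i j + 1)" "1 < i j \<Longrightarrow> i \<noteq> i(j := i j - 1)" for j
    by (metis fun_upd_same n_not_Suc_n Suc_eq_plus1, metis fun_upd_same diff_less less_numeral_extra(1) less_trans nat_neq_iff)
  then show ?thesis using True by (auto simp: grid_walk_def intro!: sum.neutral simp del: fun_upd_apply)
qed (auto simp: grid_walk_def intro!: sum.cong)

lemma sum_mult_grid_walk:
  assumes i: "i \<in> grid d N"
  shows "(\<Sum>k\<in>grid d N. g k * grid_walk d N stay up down i k) = g i * stay i
     + (\<Sum>j<d. (if i j < N j then g (i(j := i j + 1)) * up j (i j) else 0)
             + (if 1 < i j then g (i(j := i j - 1)) * down j (i j) else 0))"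
proof -
  let ?S = "grid d N"
  have "(\<Sum>k\<in>?S. g k * grid_walk d N stay up down i k) = g i * stay i
     + (\<Sum>j<d. (if i(j := i j + 1) \<in> ?S then g (i(j := i j + 1)) * (if i j < N j then up j (i j) else 0) else 0)
             + (if i(j := i j - 1) \<in> ?S then g (i(j := i j - 1)) * (if 1 < i j then down j (i j) else 0) else 0))"
    unfolding grid_walk_eq_sum
    by (simp add: distrib_left sum.distrib sum_distrib_left del: fun_upd_apply)
      (subst (1 2) sum.swap, simp add: sum_mult_if_eq finite_grid i del: fun_upd_apply cong: if_cong)
  also have "\<dots> = g i * stay i
     + (\<Sum>j<d. (if i j < N j then g (i(j := i j + 1)) * up j (i j) else 0)
             + (if 1 < i j then g (i(j := i j - 1)) * down j (i j) else 0))"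
    by (intro arg_cong2[where f = "(+)"] refl sum.cong)
      (auto simp: fun_upd_Suc_in_grid_iff[OF i] fun_upd_pred_in_grid_iff[OF i, simplified] simp del: fun_upd_apply)
  finally show ?thesis .
qed

lemma PZ_eq_grid_walk:
  assumes i: "i \<in> grid d N" and i': "i' \<in> grid d N"
  shows "PZ d p q i i' = grid_walk d N (\<lambda>i. 1 - (\<Sum>k<d. p k (i k) + q k (i k))) p q i i'"
proof -
  have "(if i' = i(j := i j + 1) then p j (i j) else 0) = (if i j < N j \<and> i' = i(j := i j + 1) then p j (i j) else 0)"
    "(if i' = i(j := i j - 1) then q j (i j) else 0) = (if 1 < i j \<and> i' = i(j := i j - 1) then q j (i j) else 0)"
    if "j < d" for j
    using i' fun_upd_Suc_in_grid_iff[OF i that] fun_upd_pred_in_grid_iff[OF i that] by auto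
  then show ?thesis
    unfolding PZ_def grid_walk_def by (auto intro!: sum.cong simp del: fun_upd_apply)
qed

definition PX :: "nat \<Rightarrow> (nat \<Rightarrow> nat) \<Rightarrow> (nat \<Rightarrow> nat \<Rightarrow> real) \<Rightarrow> (nat \<Rightarrow> nat \<Rightarrow> real)
    \<Rightarrow> (nat \<Rightarrow> nat) \<Rightarrow> (nat \<Rightarrow> nat) \<Rightarrow> real" where
  "PX d N p q = grid_walk d N (\<lambda>i. 1 - (\<Sum>k<d. p k (i k - 1) + q k (i k))) q (\<lambda>j x. p j (x - 1))"

lemma Cmat_split_coordinate:
  assumes "j < d"
  shows "Cmat d u v = (if (\<forall>l<d. l \<noteq> j \<longrightarrow> u l \<le> v l) \<and> u j \<le> v j then 1 else 0)"
  unfolding Cmat_def using assms by metis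

text \<open>The one-dimensional case of C P_Z^T = P_X C, multiplied by the indicator E of the
  order relation in the remaining coordinates.\<close>
lemma birth_death_order_balance:
  fixes up down :: "nat \<Rightarrow> real"
  assumes "1 \<le> a" "a \<le> n" "1 \<le> b" "b \<le> n" "up 0 = 0" "up n = 0"
  shows "(if b < n then (if E \<and> a \<le> b + 1 then 1 else 0) * up b else 0)
     + (if 1 < b then (if E \<and> a \<le> b - 1 then 1 else 0) * down b else 0)
     - (if E \<and> a \<le> b then 1 else 0) * (up b + down b)
   = (if a < n then (if E \<and> a + 1 \<le> b then 1 else 0) * down a else 0)
     + (if 1 < a then (if E \<and> a - 1 \<le> b then 1 else 0) * up (a - 1) else 0)
     - (if E \<and> a \<le> b then 1 else 0) * (up (a - 1) + down a)"
  using assms by (cases E; cases "a = b"; cases "a = b + 1"; cases "a < b"; auto)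

lemma Cmat_PZ_coordinate_balance:
  assumes i: "i \<in> grid d N" and i': "i' \<in> grid d N" and j: "j < d"
    and p: "p j 0 = 0" "p j (N j) = 0"
  shows "(if i' j < N j then Cmat d i (i'(j := i' j + 1)) * p j (i' j) else 0)
       + (if 1 < i' j then Cmat d i (i'(j := i' j - 1)) * q j (i' j) else 0)
       - Cmat d i i' * (p j (i' j) + q j (i' j))
     = (if i j < N j then Cmat d (i(j := i j + 1)) i' * q j (i j) else 0)
       + (if 1 < i j then Cmat d (i(j := i j - 1)) i' * p j (i j - 1) else 0)
       - Cmat d i i' * (p j (i j - 1) + q j (i j))"
proof -
  define E where "E = (\<forall>l<d. l \<noteq> j \<longrightarrow> i l \<le> i' l)"
  have C: "Cmat d i i' = (if E \<and> i j \<le> i' j then 1 else 0)"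
    unfolding E_def by (rule Cmat_split_coordinate[OF j])
  have C_upd_right: "Cmat d i (i'(j := x)) = (if E \<and> i j \<le> x then 1 else 0)" for x
    unfolding E_def by (subst Cmat_split_coordinate[OF j]) auto
  have C_upd_left: "Cmat d (i(j := x)) i' = (if E \<and> x \<le> i' j then 1 else 0)" for x
    unfolding E_def by (subst Cmat_split_coordinate[OF j]) auto
  have "1 \<le> i j" "i j \<le> N j" "1 \<le> i' j" "i' j \<le> N j"
    using i i' j by (auto simp: grid_def)
  from birth_death_order_balance[OF this p, of E "q j"]
  show ?thesis unfolding C C_upd_left C_upd_right by linarith
qed

lemma Cmat_mmult_PZ_trans:
  assumes i: "i \<in> grid d N" and i': "i' \<in> grid d N"
    and p: "\<forall>j<d. p j 0 = 0 \<and> p j (N j) = 0"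
  shows "mmult (grid d N) (Cmat d) (mtrans (PZ d p q)) i i' = mmult (grid d N) (PX d N p q) (Cmat d) i i'"
proof -
  let ?S = "grid d N"
  have "mmult ?S (Cmat d) (mtrans (PZ d p q)) i i' = (\<Sum>k\<in>?S. Cmat d i k * PZ d p q i' k)"
    by (simp add: mmult_def mtrans_def)
  also have "\<dots> = (\<Sum>k\<in>?S. Cmat d i k * grid_walk d N (\<lambda>i. 1 - (\<Sum>k<d. p k (i k) + q k (i k))) p q i' k)"
    using i' by (intro sum.cong refl) (simp add: PZ_eq_grid_walk)
  also have "\<dots> = Cmat d i i'
     + (\<Sum>j<d. (if i' j < N j then Cmat d i (i'(j := i' j + 1)) * p j (i' j) else 0)
             + (if 1 < i' j then Cmat d i (i'(j := i' j - 1)) * q j (i' j) else 0)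
             - Cmat d i i' * (p j (i' j) + q j (i' j)))"
    by (simp add: sum_mult_grid_walk[OF i'] sum_subtractf sum_distrib_left algebra_simps)
  also have "\<dots> = Cmat d i i'
     + (\<Sum>j<d. (if i j < N j then Cmat d (i(j := i j + 1)) i' * q j (i j) else 0)
             + (if 1 < i j then Cmat d (i(j := i j - 1)) i' * p j (i j - 1) else 0)
             - Cmat d i i' * (p j (i j - 1) + q j (i j)))"
    using p by (intro arg_cong2[where f = "(+)"] refl sum.cong Cmat_PZ_coordinate_balance[OF i i']) auto
  also have "\<dots> = (\<Sum>k\<in>?S. Cmat d k i' * PX d N p q i k)"
    by (simp add: PX_def sum_mult_grid_walk[OF i] sum_subtractf sum_distrib_left algebra_simps cong: if_cong)
  also have "\<dots> = mmult ?S (PX d N p q) (Cmat d) i i'"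
    by (simp add: mmult_def mult.commute)
  finally show ?thesis .
qed

theorem mainTheorem4:
  fixes d :: nat and N :: "nat \<Rightarrow> nat" and p q :: "nat \<Rightarrow> nat \<Rightarrow> real"
  assumes "d \<ge> 1"
    and "\<forall>j<d. N j \<ge> 1"
    and "\<forall>j<d. \<forall>x\<le>N j. 0 \<le> p j x \<and> p j x \<le> 1 \<and> 0 \<le> q j x \<and> q j x \<le> 1"
    and "\<forall>j<d. p j 0 = 0 \<and> q j 0 = 0 \<and> p j (N j) = 0 \<and> q j (N j) = 0"
    and "\<forall>i\<in>grid d N. (\<Sum>k<d. p k (i k) + q k (i k)) \<le> 1"
  shows "\<forall>i\<in>grid d N. \<forall>i'\<in>grid d N.
     mmult (grid d N) (mmult (grid d N) (Cmat d) (mtrans (PZ d p q))) (minv (grid d N) (Cmat d)) i i' =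
     (if i' = i then 1 - (\<Sum>k<d. p k (i k - 1) + q k (i k))
      else (\<Sum>j<d. (if i j < N j \<and> i' = i(j := i j + 1) then q j (i j) else 0)
                 + (if 1 < i j \<and> i' = i(j := i j - 1) then p j (i j - 1) else 0)))"
proof (intro ballI)
  fix i i' assume i: "i \<in> grid d N" and i': "i' \<in> grid d N"
  let ?S = "grid d N"
  have p: "\<forall>j<d. p j 0 = 0 \<and> p j (N j) = 0"
    using assms(4) by blast \<comment> \<open>the only hypothesis the identity needs\<close>
  have "mmult ?S (mmult ?S (Cmat d) (mtrans (PZ d p q))) (minv ?S (Cmat d)) i i'
      = mmult ?S (mmult ?S (PX d N p q) (Cmat d)) (Cmat_inv d N) i i'"
    unfolding minv_Cmat mmult_def[of ?S _ "Cmat_inv d N"]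
    using i by (intro sum.cong refl) (simp add: Cmat_mmult_PZ_trans[OF i _ p])
  also have "\<dots> = PX d N p q i i'"
    using i i' by (intro mmult_cancel_right_inverse) (simp_all add: finite_grid Cmat_mmult_Cmat_inv)
  finally show "mmult ?S (mmult ?S (Cmat d) (mtrans (PZ d p q))) (minv ?S (Cmat d)) i i' =
     (if i' = i then 1 - (\<Sum>k<d. p k (i k - 1) + q k (i k))
      else (\<Sum>j<d. (if i j < N j \<and> i' = i(j := i j + 1) then q j (i j) else 0)
                 + (if 1 < i j \<and> i' = i(j := i j - 1) then p j (i j - 1) else 0)))"
    by (simp add: PX_def grid_walk_def cong: if_cong)
qed

end
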